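(* For every integer $n\ge1$, there exists an injective group homomorphism $D_{2^{n+1}}\hookrightarrow T\mathcal R_{2^n}(\mathbb F_2)$.
   Context: The Riordan group over $\mathbb F_2$ consists of pairs $(g,f)$ of formal power series over $\mathbb F_2$ with $g=1+\cdots$, $f=t+\cdots$, identified with lower triangular matrices $(d_{i,k})$, $d_{i,k}=[t^i]gf^k$, with matrix multiplication (equivalently $(g_1,f_1)(g_2,f_2)=(g_1\cdot(g_2\circ f_1),\,f_2\circ f_1)$). For $m\ge0$, $T\mathcal R_m(\mathbb F_2)$ is the finite group of $(m+1)\times(m+1)$ upper-left truncations $(d_{i,k})_{0\le i,k\le m}$ of these matrices. $D_{2^{q}}$ denotes the dihedral group $\langle r,s\mid r^{2^{q}}=s^2=1,\ rsr=s\rangle$ of order $2^{q+1}$. *)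

theory Defs
  imports "HOL-Library.Z2" "HOL-Computational_Algebra.Formal_Power_Series" "HOL-Algebra.Group"
begin

text \<open>Matrices over F2 (the type bit) are functions nat => nat => bit;
  an (m+1)x(m+1) truncation is stored as a function that vanishes outside {0..m}x{0..m}.\<close>

definition riordan_trunc :: "nat \<Rightarrow> bit fps \<Rightarrow> bit fps \<Rightarrow> nat \<Rightarrow> nat \<Rightarrow> bit" where
  "riordan_trunc m g f = (\<lambda>i k. if i \<le> m \<and> k \<le> m then fps_nth (g * f ^ k) i else 0)"

definition is_riordan_pair :: "bit fps \<Rightarrow> bit fps \<Rightarrow> bool" where
  "is_riordan_pair g f \<longleftrightarrow> fps_nth g 0 = 1 \<and> fps_nth f 0 = 0 \<and> fps_nth f 1 = 1"

definition trunc_mat_mult :: "nat \<Rightarrow> (nat \<Rightarrow> nat \<Rightarrow> bit) \<Rightarrow> (nat \<Rightarrow> nat \<Rightarrow> bit) \<Rightarrow> nat \<Rightarrow> nat \<Rightarrow> bit" where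
  "trunc_mat_mult m A B = (\<lambda>i k. if i \<le> m \<and> k \<le> m then (\<Sum>j\<le>m. A i j * B j k) else 0)"

definition trunc_mat_one :: "nat \<Rightarrow> nat \<Rightarrow> nat \<Rightarrow> bit" where
  "trunc_mat_one m = (\<lambda>i k. if i \<le> m \<and> k \<le> m \<and> i = k then 1 else 0)"

definition TR :: "nat \<Rightarrow> (nat \<Rightarrow> nat \<Rightarrow> bit) monoid" where
  "TR m = \<lparr> carrier = {riordan_trunc m g f | g f. is_riordan_pair g f},
            mult = trunc_mat_mult m, one = trunc_mat_one m \<rparr>"

text \<open>Dihedral group with rotation of order N (order 2N): pairs (a, x), a in {0..<N},
  representing r^a s^x; r = (1,False), s = (0,True), so r^N = s^2 = 1, r s r = s.
  D_{2^q} of the paper is dihedral (2^q).\<close>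
definition dihedral :: "nat \<Rightarrow> (nat \<times> bool) monoid" where
  "dihedral N = \<lparr> carrier = {0..<N} \<times> UNIV,
     mult = (\<lambda>(a, x) (b, y). ((if x then a + (N - b) else a + b) mod N, x \<noteq> y)),
     one = (0, False) \<rparr>"

end

(*
  Send r^a s^x to the truncation of ((1 + t)^a, t) (1, t/(1 + t))^x.  Over F_2 the series
  t/(1 + t) is a compositional involution and (1 + t) o (t/(1 + t)) = 1/(1 + t), so
  conjugating by the reflection inverts the rotation, exactly as in the dihedral group.  The
  relation r^N = 1 holds after truncation to size m + 1 because, in characteristic 2,
  (1 + t)^(2^k) = 1 + t^(2^k), which is 1 modulo t^(m+1) as soon as m < 2^k.
  Faithfulness: the first column of the image of r^a s^x is (1 + t)^a modulo t^(m+1).  If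
  0 < d < 2^k and d = 2^v u with u odd, then (1 + t)^d = (1 + t^(2^v))^u has coefficient
  u = 1 at t^(2^v), and 2^v <= m when 2^k <= 2m; so distinct rotations give distinct
  columns.  The entry (2,1) then tells r^a from r^a s.
*)

theory Submission
  imports Defs
begin

lemma fps_nth_one_plus_fps_X_power_power:
  fixes p u :: nat
  assumes "0 < p"
  shows "fps_nth ((1 + fps_X ^ p :: 'a::comm_semiring_1 fps) ^ u) i
           = (if p dvd i then of_nat (u choose (i div p)) else 0)"
proof -
  have "(1 + fps_X ^ p :: 'a fps) ^ u = (\<Sum>k\<le>u. of_nat (u choose k) * fps_X ^ (p * k))"
    by (subst add.commute) (simp add: binomial_ring power_mult)
  then have "fps_nth ((1 + fps_X ^ p :: 'a fps) ^ u) i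
               = (\<Sum>k\<le>u. of_nat (u choose k) * fps_nth (fps_X ^ (p * k)) i)"
    by (simp add: fps_sum_nth flip: fps_of_nat del: fps_X_power_nth)
  also have "\<dots> = (\<Sum>k\<le>u. if i = p * k then of_nat (u choose k) else 0)"
    by (intro sum.cong) auto
  also have "\<dots> = (if p dvd i then of_nat (u choose (i div p)) else 0)"
  proof (cases "p dvd i")
    case True
    then have "i = p * k \<longleftrightarrow> k = i div p" for k
      using assms by auto
    then show ?thesis
      using True by (simp add: sum.delta binomial_eq_0)
  qed (auto intro!: sum.neutral)
  finally show ?thesis .
qed

lemma one_plus_power_two_power:
  fixes x :: "'a::comm_semiring_1"
  assumes "(2::'a) = 0"
  shows "(1 + x) ^ (2 ^ k) = 1 + x ^ (2 ^ k)"
proof (induction k)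
  case (Suc k)
  have "(1 + x) ^ (2 ^ Suc k) = ((1 + x) ^ (2 ^ k))\<^sup>2"
    by (simp add: mult.commute flip: power_mult)
  also have "\<dots> = (1 + x ^ (2 ^ k))\<^sup>2"
    by (simp only: Suc.IH)
  also have "\<dots> = 1 + (x ^ (2 ^ k))\<^sup>2 + 2 * x ^ (2 ^ k)"
    by (simp add: power2_eq_square algebra_simps mult_2)
  finally show ?case
    using assms by (simp add: mult.commute flip: power_mult)
qed simp

lemma fps_nth_mult_compose:
  fixes f g c :: "'a::comm_ring_1 fps"
  assumes f0: "fps_nth f 0 = 0" and "i \<le> m"
  shows "fps_nth (g * (c oo f)) i = (\<Sum>j\<le>m. fps_nth c j * fps_nth (g * f ^ j) i)"
proof -
  have compose_nth: "fps_nth (c oo f) l = (\<Sum>j\<le>m. fps_nth c j * fps_nth (f ^ j) l)"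
    if "l \<le> m" for l
  proof -
    have "fps_nth (f ^ j) l = 0" if "l < j" for j
      using startsby_zero_power_prefix[OF f0] that by blast
    then show ?thesis
      using that unfolding fps_compose_nth by (intro sum.mono_neutral_left) auto
  qed
  have "fps_nth (g * (c oo f)) i
          = (\<Sum>l=0..i. fps_nth g l * (\<Sum>j\<le>m. fps_nth c j * fps_nth (f ^ j) (i - l)))"
    using \<open>i \<le> m\<close> by (simp add: fps_mult_nth compose_nth)
  also have "\<dots> = (\<Sum>j\<le>m. fps_nth c j * (\<Sum>l=0..i. fps_nth g l * fps_nth (f ^ j) (i - l)))"
    by (simp add: sum_distrib_left mult_ac sum.swap[of _ "{0..i}"])
  finally show ?thesis
    by (simp add: fps_mult_nth)
qed

lemma fps_cutoff_mult_right_cong: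
  assumes "fps_cutoff n h = fps_cutoff n h'"
  shows "fps_cutoff n (g * h) = fps_cutoff n (g * h')"
proof -
  have "fps_nth (g * h) k = fps_nth (g * h') k" if "k < n" for k
    using fps_cutoff_right_mult_nth[OF that, of g h] fps_cutoff_right_mult_nth[OF that, of g h']
    by (simp add: assms)
  then show ?thesis
    by (simp add: fps_cutoff_eq_fps_cutoff_iff)
qed

lemma riordan_trunc_mult:
  assumes f0: "fps_nth f1 0 = 0"
  shows "trunc_mat_mult m (riordan_trunc m g1 f1) (riordan_trunc m g2 f2)
           = riordan_trunc m (g1 * (g2 oo f1)) (f2 oo f1)"
proof (intro ext)
  fix i k
  show "trunc_mat_mult m (riordan_trunc m g1 f1) (riordan_trunc m g2 f2) i k
          = riordan_trunc m (g1 * (g2 oo f1)) (f2 oo f1) i k"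
  proof (cases "i \<le> m \<and> k \<le> m")
    case True
    have "trunc_mat_mult m (riordan_trunc m g1 f1) (riordan_trunc m g2 f2) i k
            = (\<Sum>j\<le>m. fps_nth (g2 * f2 ^ k) j * fps_nth (g1 * f1 ^ j) i)"
      using True by (simp add: trunc_mat_mult_def riordan_trunc_def mult.commute
                          del: mult_bit_eq_and add_bit_eq_xor)
    also have "\<dots> = fps_nth (g1 * (g2 * f2 ^ k oo f1)) i"
      using True by (intro fps_nth_mult_compose[OF f0, symmetric]) simp
    also have "g1 * (g2 * f2 ^ k oo f1) = g1 * (g2 oo f1) * (f2 oo f1) ^ k"
      by (simp add: fps_compose_mult_distrib[OF f0] fps_compose_power[OF f0] mult.assoc)
    finally show ?thesis
      using True by (simp add: riordan_trunc_def)
  qed (auto simp: trunc_mat_mult_def riordan_trunc_def)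
qed

lemma riordan_trunc_cutoff_cong:
  assumes "fps_cutoff (Suc m) g = fps_cutoff (Suc m) g'"
  shows "riordan_trunc m g f = riordan_trunc m g' f"
proof -
  have "fps_nth (g * h) i = fps_nth (g' * h) i" if "i \<le> m" for h i
  proof -
    have "fps_nth (g * h) i = fps_nth (fps_cutoff (Suc m) g * h) i"
      using that by (simp add: fps_cutoff_left_mult_nth)
    also have "\<dots> = fps_nth (g' * h) i"
      using that by (simp add: assms fps_cutoff_left_mult_nth)
    finally show ?thesis .
  qed
  then show ?thesis
    by (simp add: riordan_trunc_def fun_eq_iff)
qed

definition rot_g :: "bit fps" where
  "rot_g = 1 + fps_X"

definition refl_f :: "bit fps" where
  "refl_f = fps_X * inverse rot_g"

lemma rot_g_nth_0 [simp]: "fps_nth rot_g 0 = 1"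
  by (simp add: rot_g_def)

lemma bit_fps_two_eq_zero: "(2 :: bit fps) = 0"
  by (simp add: fps_numeral_fps_const)

lemma inverse_rot_g: "inverse rot_g = Abs_fps (\<lambda>_. 1)"
  by (rule fps_inverse_unique) (simp add: fps_eq_iff rot_g_def distrib_right)

lemma refl_f_nth: "fps_nth refl_f n = (if n = 0 then 0 else 1)"
  by (simp add: refl_f_def inverse_rot_g)

lemma refl_f_times_rot_g: "refl_f * rot_g = fps_X"
  by (simp add: refl_f_def rot_g_def mult.assoc inverse_mult_eq_1)

lemma rot_g_compose_refl_f: "rot_g oo refl_f = inverse rot_g"
proof -
  have "rot_g * (1 + refl_f) = 1"
    using refl_f_times_rot_g bit_fps_two_eq_zero
    by (simp add: rot_g_def algebra_simps flip: mult_2)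
  then have "inverse rot_g = 1 + refl_f"
    by (rule fps_inverse_unique)
  then show ?thesis
    by (simp add: rot_g_def fps_compose_add_distrib refl_f_nth)
qed

lemma refl_f_compose_refl_f: "refl_f oo refl_f = fps_X"
proof -
  have "refl_f oo refl_f = (fps_X oo refl_f) * (inverse rot_g oo refl_f)"
    unfolding refl_f_def by (rule fps_compose_mult_distrib) (simp flip: refl_f_def add: refl_f_nth)
  also have "inverse rot_g oo refl_f = inverse (rot_g oo refl_f)"
    by (rule fps_inverse_compose) (simp_all add: refl_f_nth rot_g_def)
  also have "\<dots> = rot_g"
    by (simp add: rot_g_compose_refl_f)
  finally show ?thesis
    by (simp add: refl_f_nth refl_f_times_rot_g)
qed

lemma rot_g_power_two_power: "rot_g ^ (2 ^ k) = 1 + fps_X ^ (2 ^ k)"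
  unfolding rot_g_def by (rule one_plus_power_two_power[OF bit_fps_two_eq_zero])

lemma fps_cutoff_rot_g_power_period:
  assumes "m < 2 ^ k"
  shows "fps_cutoff (Suc m) (rot_g ^ (2 ^ k * q)) = fps_cutoff (Suc m) 1"
proof -
  have "fps_nth (rot_g ^ (2 ^ k * q)) i = fps_nth 1 i" if "i < Suc m" for i
    using that assms nat_dvd_not_less[of i "2 ^ k"]
    by (auto simp: power_mult rot_g_power_two_power fps_nth_one_plus_fps_X_power_power)
  then show ?thesis
    by (simp add: fps_cutoff_eq_fps_cutoff_iff)
qed

lemma riordan_trunc_mult_rot_g_power_period:
  assumes "m < 2 ^ k"
  shows "riordan_trunc m (g * rot_g ^ (2 ^ k * q)) f = riordan_trunc m g f"
  using fps_cutoff_mult_right_cong[OF fps_cutoff_rot_g_power_period[OF assms], of g]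
  by (intro riordan_trunc_cutoff_cong) simp

lemma riordan_trunc_rot_g_power_mod:
  assumes "m < 2 ^ k"
  shows "riordan_trunc m (rot_g ^ j) f = riordan_trunc m (rot_g ^ (j mod 2 ^ k)) f"
proof -
  have "rot_g ^ j = rot_g ^ (j mod 2 ^ k) * rot_g ^ (2 ^ k * (j div 2 ^ k))"
    by (simp flip: power_add)
  then show ?thesis
    using riordan_trunc_mult_rot_g_power_period[OF assms] by simp
qed

lemma rot_g_power_cutoff_ne_one:
  assumes "0 < d" "d < 2 ^ k" "2 ^ k \<le> 2 * m"
  shows "fps_cutoff (Suc m) (rot_g ^ d) \<noteq> 1"
proof -
  define v where "v = multiplicity 2 d"
  obtain u where d: "d = 2 ^ v * u" and "odd u"
    using multiplicity_decompose'[of d 2] assms(1) unfolding v_def by auto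
  have "2 ^ v \<le> d"
    using d \<open>odd u\<close> by (cases u) auto
  then have "(2::nat) ^ v < 2 ^ k"
    using assms(2) by linarith
  then have "v < k"
    by simp
  then have "2 * 2 ^ v \<le> (2::nat) ^ k"
    using power_increasing[of "Suc v" k "2::nat"] by simp
  then have "2 ^ v \<le> m"
    using assms(3) by linarith
  have "fps_nth (rot_g ^ d) (2 ^ v) = of_nat u"
    by (simp add: d power_mult rot_g_power_two_power fps_nth_one_plus_fps_X_power_power)
  also have "\<dots> = 1"
    using \<open>odd u\<close> by (auto elim!: oddE simp del: add_bit_eq_xor mult_bit_eq_and)
  finally have "fps_nth (fps_cutoff (Suc m) (rot_g ^ d)) (2 ^ v) = 1"
    using \<open>2 ^ v \<le> m\<close> by simp
  moreover have "fps_nth (1 :: bit fps) (2 ^ v) = 0"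
    by simp
  ultimately show ?thesis
    by (metis zero_neq_one)
qed

lemma rot_g_power_cutoff_inj:
  assumes "fps_cutoff (Suc m) (rot_g ^ a) = fps_cutoff (Suc m) (rot_g ^ b)"
    and "a < 2 ^ k" "b < 2 ^ k" "2 ^ k \<le> 2 * m"
  shows "a = b"
proof -
  have "a = b" if cutoff_eq: "fps_cutoff (Suc m) (rot_g ^ a) = fps_cutoff (Suc m) (rot_g ^ b)"
    and "a \<le> b" "b < 2 ^ k" for a b
  proof -
    have unit: "inverse (rot_g ^ a) * rot_g ^ a = 1"
      by (simp add: rot_g_def inverse_mult_eq_1 fps_power_zeroth)
    have "fps_cutoff (Suc m) (inverse (rot_g ^ a) * rot_g ^ a)
            = fps_cutoff (Suc m) (inverse (rot_g ^ a) * rot_g ^ a * rot_g ^ (b - a))"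
      using fps_cutoff_mult_right_cong[OF cutoff_eq] \<open>a \<le> b\<close>
      by (simp add: mult.assoc flip: power_add)
    then have "fps_cutoff (Suc m) (rot_g ^ (b - a)) = 1"
      by (simp add: unit fps_cutoff_one)
    then show "a = b"
      using rot_g_power_cutoff_ne_one[of "b - a" k m] assms(4) that(2,3) by linarith
  qed
  then show ?thesis
    using assms by (metis linear)
qed

definition dihedral_riordan :: "nat \<Rightarrow> nat \<times> bool \<Rightarrow> nat \<Rightarrow> nat \<Rightarrow> bit" where
  "dihedral_riordan m = (\<lambda>(a, x). riordan_trunc m (rot_g ^ a) (if x then refl_f else fps_X))"

lemma dihedral_riordan_in_TR: "dihedral_riordan m (a, x) \<in> carrier (TR m)"
proof -
  have "is_riordan_pair (rot_g ^ a) (if x then refl_f else fps_X)"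
    by (simp add: is_riordan_pair_def fps_power_zeroth refl_f_nth)
  then show ?thesis
    unfolding TR_def dihedral_riordan_def by (simp only: partial_object.simps prod.case) blast
qed

lemma dihedral_riordan_mult:
  assumes "m < 2 ^ k" "b < 2 ^ k"
  shows "trunc_mat_mult m (dihedral_riordan m (a, x)) (dihedral_riordan m (b, y))
           = dihedral_riordan m ((if x then a + (2 ^ k - b) else a + b) mod 2 ^ k, x \<noteq> y)"
proof (cases x)
  case False
  let ?f = "if y then refl_f else fps_X"
  have "trunc_mat_mult m (dihedral_riordan m (a, x)) (dihedral_riordan m (b, y))
          = riordan_trunc m (rot_g ^ (a + b)) ?f"
    using False by (simp add: dihedral_riordan_def riordan_trunc_mult power_add)
  also have "\<dots> = riordan_trunc m (rot_g ^ ((a + b) mod 2 ^ k)) ?f"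
    by (rule riordan_trunc_rot_g_power_mod[OF assms(1)])
  finally show ?thesis
    using False by (simp add: dihedral_riordan_def)
next
  case True
  let ?f = "if y then fps_X else refl_f"
  have "trunc_mat_mult m (dihedral_riordan m (a, x)) (dihedral_riordan m (b, y))
          = riordan_trunc m (rot_g ^ a * inverse rot_g ^ b) ?f"
    using True by (simp add: dihedral_riordan_def riordan_trunc_mult refl_f_nth
                             rot_g_compose_refl_f refl_f_compose_refl_f flip: fps_compose_power)
  also have "\<dots> = riordan_trunc m (rot_g ^ a * inverse rot_g ^ b * rot_g ^ (2 ^ k * 1)) ?f"
    by (rule riordan_trunc_mult_rot_g_power_period[OF assms(1), symmetric])
  also have "rot_g ^ a * inverse rot_g ^ b * rot_g ^ (2 ^ k * 1) = rot_g ^ (a + (2 ^ k - b))"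
  proof -
    have "rot_g ^ (2 ^ k * 1) = rot_g ^ b * rot_g ^ (2 ^ k - b)"
      using assms(2) by (simp flip: power_add)
    moreover have "inverse rot_g * rot_g = 1"
      by (simp add: rot_g_def inverse_mult_eq_1)
    ultimately show ?thesis
      by (simp add: power_add mult_ac flip: power_mult_distrib)
  qed
  also have "riordan_trunc m (rot_g ^ (a + (2 ^ k - b))) ?f
               = riordan_trunc m (rot_g ^ ((a + (2 ^ k - b)) mod 2 ^ k)) ?f"
    by (rule riordan_trunc_rot_g_power_mod[OF assms(1)])
  finally show ?thesis
    using True by (simp add: dihedral_riordan_def)
qed

lemma dihedral_riordan_hom:
  assumes "m < 2 ^ k"
  shows "dihedral_riordan m \<in> hom (dihedral (2 ^ k)) (TR m)"
proof (rule homI)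
  show "dihedral_riordan m p \<in> carrier (TR m)" for p
    using dihedral_riordan_in_TR by (cases p) simp
  show "dihedral_riordan m (p \<otimes>\<^bsub>dihedral (2 ^ k)\<^esub> q)
          = dihedral_riordan m p \<otimes>\<^bsub>TR m\<^esub> dihedral_riordan m q"
    if "p \<in> carrier (dihedral (2 ^ k))" "q \<in> carrier (dihedral (2 ^ k))" for p q
    using that by (auto simp: dihedral_def TR_def dihedral_riordan_mult[OF assms])
qed

lemma dihedral_riordan_nth_2_1:
  assumes "2 \<le> m"
  shows "dihedral_riordan m (a, x) 2 1 = fps_nth (rot_g ^ a) 1 + of_bool x"
  using assms
  by (simp add: dihedral_riordan_def riordan_trunc_def fps_mult_nth numeral_2_eq_2 refl_f_nth
                fps_power_zeroth rot_g_def del: mult_bit_eq_and add_bit_eq_xor)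

lemma dihedral_riordan_inj:
  assumes "2 \<le> m" "2 ^ k \<le> 2 * m"
  shows "inj_on (dihedral_riordan m) (carrier (dihedral (2 ^ k)))"
proof (rule inj_onI)
  fix p q
  assume "p \<in> carrier (dihedral (2 ^ k))" "q \<in> carrier (dihedral (2 ^ k))"
  then obtain a x b y where p: "p = (a, x)" "a < 2 ^ k" and q: "q = (b, y)" "b < 2 ^ k"
    by (auto simp: dihedral_def)
  assume eq: "dihedral_riordan m p = dihedral_riordan m q"
  have "fps_nth (rot_g ^ a) i = fps_nth (rot_g ^ b) i" if "i \<le> m" for i
    using fun_cong[OF fun_cong[OF eq, of i], of 0] that p q
    by (simp add: dihedral_riordan_def riordan_trunc_def)
  then have "fps_cutoff (Suc m) (rot_g ^ a) = fps_cutoff (Suc m) (rot_g ^ b)"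
    by (simp add: fps_cutoff_eq_fps_cutoff_iff)
  then have "a = b"
    using p(2) q(2) assms(2) by (rule rot_g_power_cutoff_inj)
  then have "dihedral_riordan m (a, x) 2 1 = dihedral_riordan m (a, y) 2 1"
    using eq p q by simp
  then have "x = y"
    using dihedral_riordan_nth_2_1[OF assms(1), of a]
    by (cases x; cases y) (simp_all del: add_bit_eq_xor)
  with p q \<open>a = b\<close> show "p = q"
    by simp
qed

theorem theorem12:
  fixes n :: nat
  assumes "n \<ge> 1"
  shows "\<exists>h. h \<in> hom (dihedral (2 ^ (n + 1))) (TR (2 ^ n)) \<and>
             inj_on h (carrier (dihedral (2 ^ (n + 1))))"
proof (intro exI conjI)
  have "(2::nat) \<le> 2 ^ n"
    using assms by (metis power_one_right power_increasing one_le_numeral)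
  then show "inj_on (dihedral_riordan (2 ^ n)) (carrier (dihedral (2 ^ (n + 1))))"
    by (intro dihedral_riordan_inj) auto
  show "dihedral_riordan (2 ^ n) \<in> hom (dihedral (2 ^ (n + 1))) (TR (2 ^ n))"
    by (intro dihedral_riordan_hom) simp
qed

end
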